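(* Let $\Omega\subseteq\mathbb{R}^n$ be open and convex, let $f:\Omega\to\mathbb{R}$ be convex and differentiable with $\nabla f$ Lipschitz continuous with constant $L$ (extend $f$ by $+\infty$ outside $\Omega$), let $g:\mathbb{R}^n\to\mathbb{R}\cup\{+\infty\}$ be convex with closed sublevel sets, and let $h=f+g$ have compact sublevel sets and $h^\star=\inf_x h(x)<\infty$. Run the oracle-structured minimization method (described in the context) from $x^0\in\Omega$, producing iterates $x^k$ and tentative steps $v^k=x^{k+1/2}-x^k$. Then $h(x^{k+1})\le h(x^k)$ for all $k$ and $v^k\to 0$ as $k\to\infty$.
   Context: Oracle-structured minimization method (OSMM). Fixed parameters: memory $M\ge1$ (integer), $\alpha,\beta\in(0,1)$, $\tau_{\min}>0$, $0<\mu_{\min}\le\mu_{\max}$, $\gamma_{\rm dec}\in(0,1)$, $\gamma_{\rm inc}>1$, and an initial $\mu_0\in[\mu_{\min},\mu_{\max}]$. There is a constant $C$ and, for each $k$, a symmetric positive semidefinite matrix $H_k$ with $\|H_k\|_2\le C$ (otherwise arbitrary, e.g. a quasi-Newton curvature estimate). For $k=0,1,2,\dots$: (1) $l_k(x)=\max_{i=\max\{0,k-M+1\},\dots,k}\big(f(x^i)+\nabla f(x^i)^T(x-x^i)\big)$; $\tau_k=\operatorname{Tr}(H_k)/n$; $\lambda_k=\mu_k(\tau_k+\tau_{\min})$. (2) $x^{k+1/2}=\operatorname*{argmin}_x\big(l_k(x)+g(x)+\tfrac12(x-x^k)^T(H_k+\lambda_kI)(x-x^k)\big)$, $v^k=x^{k+1/2}-x^k$.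 (3) With $\phi_k(t)=f(x^k+tv^k)+t\,g(x^{k+1/2})+(1-t)g(x^k)$ for $t\in[0,1]$, let $t_k=\beta^j$ where $j$ is the smallest nonnegative integer with $\phi_k(t_k)\le h(x^k)-\frac{\alpha t_k}{2}(v^k)^T(H_k+\lambda_kI)v^k$; set $x^{k+1}=x^k+t_kv^k$. (4) $\mu_{k+1}=\max\{\gamma_{\rm dec}\mu_k,\mu_{\min}\}$ if $t_k=1$, and $\mu_{k+1}=\min\{\gamma_{\rm inc}\mu_k,\mu_{\max}\}$ if $t_k<1$. *)

theory Defs
  imports "HOL-Analysis.Analysis" "HOL-Library.Extended_Real"
begin

definition ext_f :: "(real^'n) set \<Rightarrow> (real^'n \<Rightarrow> real) \<Rightarrow> real^'n \<Rightarrow> ereal" where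
  "ext_f \<Omega> f x = (if x \<in> \<Omega> then ereal (f x) else \<infinity>)"

definition ereal_convex :: "(real^'n \<Rightarrow> ereal) \<Rightarrow> bool" where
  "ereal_convex g \<longleftrightarrow> convex {(x, r::real). g x \<le> ereal r}"

text \<open>Piecewise-linear model l_k built from the last M iterates
  (indices max 0 (k-M+1), ..., k; note Suc k - M truncates at 0).\<close>
definition lin_model ::
  "(real^'n \<Rightarrow> real) \<Rightarrow> (real^'n \<Rightarrow> real^'n) \<Rightarrow> (nat \<Rightarrow> real^'n) \<Rightarrow> nat \<Rightarrow> nat \<Rightarrow> real^'n \<Rightarrow> real" where
  "lin_model f fgrad x M k y = Max ((\<lambda>i. f (x i) + fgrad (x i) \<bullet> (y - x i)) ` {Suc k - M..k})"

definition osmm_lambda :: "real \<Rightarrow> real \<Rightarrow> real^'n^'n \<Rightarrow> real" where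
  "osmm_lambda \<tau>min \<mu>k Hk = \<mu>k * (trace Hk / real CARD('n) + \<tau>min)"

definition osmm_quad :: "real^'n^'n \<Rightarrow> real \<Rightarrow> real^'n \<Rightarrow> real" where
  "osmm_quad Hk lamk d = (1/2) * (d \<bullet> ((Hk + lamk *\<^sub>R mat 1) *v d))"

text \<open>The OSMM iteration: x k = x^k, xh k = x^{k+1/2}, mu k = mu_k, t k = t_k,
  for the given sequence of curvature matrices H.\<close>
definition osmm_run ::
  "(real^'n) set \<Rightarrow> (real^'n \<Rightarrow> real) \<Rightarrow> (real^'n \<Rightarrow> real^'n) \<Rightarrow> (real^'n \<Rightarrow> ereal) \<Rightarrow>
   nat \<Rightarrow> real \<Rightarrow> real \<Rightarrow> real \<Rightarrow> real \<Rightarrow> real \<Rightarrow> real \<Rightarrow> real \<Rightarrow>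
   (nat \<Rightarrow> real^'n^'n) \<Rightarrow> (nat \<Rightarrow> real^'n) \<Rightarrow> (nat \<Rightarrow> real^'n) \<Rightarrow> (nat \<Rightarrow> real) \<Rightarrow> (nat \<Rightarrow> real) \<Rightarrow> bool"
where
  "osmm_run \<Omega> f fgrad g M \<alpha> \<beta> \<tau>min \<mu>min \<mu>max \<gamma>dec \<gamma>inc H x xh \<mu> t \<longleftrightarrow>
     (\<forall>k. let lamk = osmm_lambda \<tau>min (\<mu> k) (H k);
              v = xh k - x k;
              h = (\<lambda>y. ext_f \<Omega> f y + g y);
              \<phi> = (\<lambda>s. ext_f \<Omega> f (x k + s *\<^sub>R v) + ereal s * g (xh k) + ereal (1 - s) * g (x k));
              ok = (\<lambda>j::nat. \<phi> (\<beta> ^ j) \<le> h (x k) - ereal (\<alpha> * \<beta> ^ j * osmm_quad (H k) lamk v))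
          in
            \<comment> \<open>step (2): x^{k+1/2} is the minimizer of the subproblem\<close>
            (\<forall>y. ereal (lin_model f fgrad x M k (xh k)) + g (xh k) + ereal (osmm_quad (H k) lamk (xh k - x k))
                 \<le> ereal (lin_model f fgrad x M k y) + g y + ereal (osmm_quad (H k) lamk (y - x k)))
            \<comment> \<open>step (3): backtracking line search, smallest j\<close>
          \<and> (\<exists>j. t k = \<beta> ^ j \<and> ok j \<and> (\<forall>i<j. \<not> ok i))
          \<and> x (Suc k) = x k + t k *\<^sub>R v
            \<comment> \<open>step (4): update of mu\<close>
          \<and> \<mu> (Suc k) = (if t k = 1 then max (\<gamma>dec * \<mu> k) \<mu>min else min (\<gamma>inc * \<mu> k) \<mu>max))"

end

theory Submission
  imports Defs
begin

text \<open>
  The cutting-plane model \<open>l_k\<close> lies below \<open>f\<close> (convexity) and above the linearisation of \<open>f\<close>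
  at \<open>x_k\<close>, so optimality of the tentative point gives
  \<open>\<nabla>f(x_k)\<bullet>v_k + g(x_k + v_k) - g(x_k) \<le> -q_k\<close>, where
  \<open>q_k = (1/2) v_k\<bullet>(H_k + \<lambda>_k I) v_k \<ge> (\<mu>min \<tau>min / 2) |v_k|\<^sup>2\<close>.
  Convexity of \<open>g\<close> turns the line-search test into \<open>h(x_(k+1)) \<le> h(x_k) - \<alpha> t_k q_k\<close>, so \<open>h\<close>
  decreases along the iterates and, being bounded below, forces \<open>t_k |v_k|\<^sup>2 \<rightarrow> 0\<close>.
  The iterates stay in the compact sublevel set \<open>{h \<le> h(x_0)} \<subseteq> \<Omega>\<close>, hence keep a distance
  \<open>\<delta> > 0\<close> from the boundary of \<open>\<Omega>\<close>; by the descent lemma every step \<open>s \<le> \<theta>\<close> whose segment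
  stays in \<open>\<Omega>\<close> passes the test. Backtracking therefore ends with \<open>t_k = 1\<close>, \<open>t_k > \<beta>\<theta>\<close> or
  \<open>t_k |v_k| \<ge> \<beta>\<delta>\<close>, and in each case \<open>t_k |v_k|\<^sup>2 \<rightarrow> 0\<close> yields \<open>v_k \<rightarrow> 0\<close>.
\<close>

lemma has_real_derivative_along_line:
  fixes f :: "'a::real_inner \<Rightarrow> real"
  assumes "(f has_derivative (\<lambda>u. D \<bullet> u)) (at (y + r *\<^sub>R d))"
  shows "((\<lambda>s. f (y + s *\<^sub>R d)) has_real_derivative (D \<bullet> d)) (at r within S)"
proof -
  have "((\<lambda>s. y + s *\<^sub>R d) has_derivative (\<lambda>u. u *\<^sub>R d)) (at r within S)"
    by (auto intro!: derivative_eq_intros)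
  from has_derivative_compose[OF this assms]
  have "((\<lambda>s. f (y + s *\<^sub>R d)) has_derivative (\<lambda>u. D \<bullet> (u *\<^sub>R d))) (at r within S)"
    by (simp add: o_def)
  moreover have "(\<lambda>u. D \<bullet> (u *\<^sub>R d)) = (*) (D \<bullet> d)"
    by (auto simp: fun_eq_iff)
  ultimately show ?thesis
    by (simp add: has_field_derivative_def)
qed

lemma convex_on_gradient_inequality:
  fixes f :: "'a::real_inner \<Rightarrow> real"
  assumes "open \<Omega>" "convex_on \<Omega> f" "y \<in> \<Omega>" "z \<in> \<Omega>"
    and "(f has_derivative (\<lambda>u. D \<bullet> u)) (at y)"
  shows "f y + D \<bullet> (z - y) \<le> f z"
proof -
  define d where "d = z - y"
  define A where "A = (\<lambda>r. y + r *\<^sub>R d) -` \<Omega>"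
  have affine: "y + ((1 - u) * a + u * b) *\<^sub>R d = (1 - u) *\<^sub>R (y + a *\<^sub>R d) + u *\<^sub>R (y + b *\<^sub>R d)"
    for u a b
    by (simp add: algebra_simps)
  have "open A"
    unfolding A_def by (rule open_vimage[OF assms(1)]) (auto intro!: continuous_intros)
  have "convex \<Omega>"
    using assms(2) by (rule convex_on_imp_convex)
  then have "convex A"
    unfolding convex_alt A_def using affine by auto
  have "convex_on A (\<lambda>r. f (y + r *\<^sub>R d))"
  proof (rule convex_onI[OF _ \<open>convex A\<close>])
    fix u a b :: real
    assume "0 < u" "u < 1" "a \<in> A" "b \<in> A"
    then show "f (y + ((1 - u) *\<^sub>R a + u *\<^sub>R b) *\<^sub>R d) \<le> (1 - u) * f (y + a *\<^sub>R d) + u * f (y + b *\<^sub>R d)"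
      using convex_onD[OF assms(2), of u "y + a *\<^sub>R d" "y + b *\<^sub>R d"] affine[of u a b]
      by (simp add: A_def)
  qed
  moreover have "0 \<in> A" "1 \<in> A"
    using assms(3,4) by (auto simp: A_def d_def)
  moreover have "((\<lambda>r. f (y + r *\<^sub>R d)) has_real_derivative (D \<bullet> d)) (at 0 within A)"
    using has_real_derivative_along_line[of f D y 0 d] assms(5) by simp
  ultimately have "D \<bullet> d * (1 - 0) \<le> f (y + 1 *\<^sub>R d) - f (y + 0 *\<^sub>R d)"
    using \<open>open A\<close> \<open>convex A\<close>
    by (intro convex_on_imp_above_tangent) (auto simp: interior_open convex_connected)
  then show ?thesis
    by (simp add: d_def)
qed

text \<open>The mean value theorem gives the constant \<open>L\<close> instead of the sharp \<open>L / 2\<close>; this suffices.\<close>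

lemma lipschitz_gradient_upper_bound:
  fixes f :: "'a::real_inner \<Rightarrow> real"
  assumes grad: "\<And>y. y \<in> \<Omega> \<Longrightarrow> (f has_derivative (\<lambda>u. fgrad y \<bullet> u)) (at y)"
    and lip: "L-lipschitz_on \<Omega> fgrad"
    and "0 \<le> s" and segment: "\<And>r. 0 \<le> r \<Longrightarrow> r \<le> s \<Longrightarrow> y + r *\<^sub>R d \<in> \<Omega>"
  shows "f (y + s *\<^sub>R d) \<le> f y + s * (fgrad y \<bullet> d) + L * s\<^sup>2 * (norm d)\<^sup>2"
proof -
  have deriv: "((\<lambda>r. f (y + r *\<^sub>R d)) has_derivative (\<lambda>u. (fgrad (y + r *\<^sub>R d) \<bullet> d) * u))
      (at r within {0..s})" if "0 \<le> r" "r \<le> s" for r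
    using has_real_derivative_along_line[OF grad[OF segment[OF that]]]
    unfolding has_field_derivative_def .
  obtain \<xi> where \<xi>: "\<xi> \<in> {0..s}"
    and mvt: "f (y + s *\<^sub>R d) - f (y + 0 *\<^sub>R d) = (fgrad (y + \<xi> *\<^sub>R d) \<bullet> d) * (s - 0)"
    using mvt_very_simple[OF \<open>0 \<le> s\<close> deriv] by blast
  have "y \<in> \<Omega>"
    using segment[of 0] \<open>0 \<le> s\<close> by simp
  have "0 \<le> L"
    using lip by (simp add: lipschitz_on_def)
  have "fgrad (y + \<xi> *\<^sub>R d) \<bullet> d - fgrad y \<bullet> d = (fgrad (y + \<xi> *\<^sub>R d) - fgrad y) \<bullet> d"
    by (simp add: inner_diff_left)
  also have "\<dots> \<le> norm (fgrad (y + \<xi> *\<^sub>R d) - fgrad y) * norm d"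
    by (rule norm_cauchy_schwarz)
  also have "\<dots> \<le> L * norm (\<xi> *\<^sub>R d) * norm d"
    using lipschitz_onD[OF lip segment[of \<xi>] \<open>y \<in> \<Omega>\<close>] \<xi>
    by (intro mult_right_mono) (auto simp: dist_norm)
  also have "\<dots> \<le> L * (s * norm d) * norm d"
    using \<xi> \<open>0 \<le> L\<close> by (intro mult_right_mono mult_left_mono) (auto intro: mult_right_mono)
  finally have "s * (fgrad (y + \<xi> *\<^sub>R d) \<bullet> d - fgrad y \<bullet> d) \<le> s * (L * (s * norm d) * norm d)"
    using \<open>0 \<le> s\<close> by (intro mult_left_mono)
  then show ?thesis
    using mvt by (simp add: algebra_simps power2_eq_square)
qed

lemma ereal_convexD:
  assumes "ereal_convex g" "g a = ereal A" "g b = ereal B" "0 \<le> s" "s \<le> 1"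
  shows "g (a + s *\<^sub>R (b - a)) \<le> ereal (s * B + (1 - s) * A)"
proof -
  let ?epi = "{(x, r::real). g x \<le> ereal r}"
  have "(1 - s) *\<^sub>R (a, A) + s *\<^sub>R (b, B) \<in> ?epi"
    using assms unfolding ereal_convex_def by (intro convexD) auto
  moreover have "a + s *\<^sub>R (b - a) = (1 - s) *\<^sub>R a + s *\<^sub>R b"
    by (simp add: algebra_simps)
  ultimately show ?thesis
    by (simp add: algebra_simps)
qed

lemma trace_nonneg_if_psd:
  fixes A :: "real^'n^'n"
  assumes "\<And>d. 0 \<le> d \<bullet> (A *v d)"
  shows "0 \<le> trace A"
proof -
  have "A $ i $ i = axis i 1 \<bullet> (A *v axis i 1)" for i
    by (simp add: matrix_vector_mult_basis inner_axis' column_def)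
  then show ?thesis
    unfolding trace_def using assms by (simp add: sum_nonneg)
qed

lemma osmm_quad_ge:
  fixes Hk :: "real^'n^'n"
  assumes "\<And>d. 0 \<le> d \<bullet> (Hk *v d)"
  shows "lam / 2 * (norm d)\<^sup>2 \<le> osmm_quad Hk lam d"
proof -
  have "(lam *\<^sub>R mat 1) *v d = lam *\<^sub>R d"
    by (simp add: vec_eq_iff matrix_vector_mult_def mat_def if_distrib if_distribR cong: if_cong)
  then have "d \<bullet> ((Hk + lam *\<^sub>R mat 1) *v d) = d \<bullet> (Hk *v d) + lam * (norm d)\<^sup>2"
    by (simp add: matrix_vector_mult_add_rdistrib inner_add_right power2_norm_eq_inner)
  then show ?thesis
    using assms[of d] unfolding osmm_quad_def by simp
qed

lemma bounded_below_if_compact_sublevels: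
  fixes h :: "'a::heine_borel \<Rightarrow> ereal"
  assumes compact: "\<And>c. compact {y. h y \<le> ereal c}" and not_minf: "\<And>y. h y \<noteq> -\<infinity>"
  shows "\<exists>B. \<forall>y. ereal B \<le> h y"
proof (rule ccontr)
  assume unbounded: "\<nexists>B. \<forall>y. ereal B \<le> h y"
  have "{y. h y \<le> ereal (- real n)} \<noteq> {}" for n
  proof -
    obtain y where "\<not> ereal (- real n) \<le> h y"
      using unbounded by blast
    then have "y \<in> {y. h y \<le> ereal (- real n)}"
      by simp
    then show ?thesis
      by blast
  qed
  moreover have "{y. h y \<le> ereal (- real n)} \<subseteq> {y. h y \<le> ereal (- real m)}" if "m \<le> n" for m n
    using that order_trans by fastforce
  ultimately obtain y where y: "\<And>n. h y \<le> ereal (- real n)"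
    using compact_nest[of "\<lambda>n. {y. h y \<le> ereal (- real n)}"] compact by blast
  have "h y \<le> ereal B" for B
  proof -
    obtain n where "- B < real n"
      using reals_Archimedean2 by blast
    then show ?thesis
      using y[of n] order_trans by fastforce
  qed
  then show False
    using ereal_bot not_minf by blast
qed

lemma tendsto_zero_if_bounded_by_decrements:
  fixes F e :: "nat \<Rightarrow> real"
  assumes "0 < c" and e_nonneg: "\<And>k. 0 \<le> e k"
    and decrement: "\<And>k. c * e k \<le> F k - F (Suc k)" and bound: "\<And>k. B \<le> F k"
  shows "e \<longlonglongrightarrow> 0"
proof -
  have "F (Suc k) \<le> F k" for k
    using decrement[of k] mult_nonneg_nonneg[OF less_imp_le[OF \<open>0 < c\<close>] e_nonneg[of k]] by linarith
  then have "decseq F"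
    by (rule decseq_SucI)
  then obtain l where "F \<longlonglongrightarrow> l"
    using decseq_convergent bound by blast
  then have "(\<lambda>k. F k - F (Suc k)) \<longlonglongrightarrow> l - l"
    by (intro tendsto_diff LIMSEQ_Suc)
  then have "(\<lambda>k. (F k - F (Suc k)) / c) \<longlonglongrightarrow> 0"
    by (intro tendsto_divide_zero) simp
  moreover have "e k \<le> (F k - F (Suc k)) / c" for k
    using decrement[of k] \<open>0 < c\<close> by (simp add: pos_le_divide_eq mult.commute)
  ultimately show ?thesis
    using e_nonneg by (intro tendsto_sandwich[of "\<lambda>_. 0" e _ "\<lambda>k. (F k - F (Suc k)) / c"]) auto
qed

locale osmm =
  fixes \<Omega> :: "(real^'n) set" and f :: "real^'n \<Rightarrow> real" and fgrad :: "real^'n \<Rightarrow> real^'n"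
    and g :: "real^'n \<Rightarrow> ereal" and L :: real
    and M :: nat and \<alpha> \<beta> \<tau>min \<mu>min \<mu>max \<gamma>dec \<gamma>inc :: real
    and H :: "nat \<Rightarrow> real^'n^'n" and x xh :: "nat \<Rightarrow> real^'n" and \<mu> t :: "nat \<Rightarrow> real"
  assumes \<Omega>_open: "open \<Omega>"
    and f_convex: "convex_on \<Omega> f"
    and f_grad: "\<And>y. y \<in> \<Omega> \<Longrightarrow> (f has_derivative (\<lambda>d. fgrad y \<bullet> d)) (at y)"
    and f_lip: "L-lipschitz_on \<Omega> fgrad"
    and g_not_minf: "\<And>y. g y \<noteq> -\<infinity>"
    and g_convex: "ereal_convex g"
    and h_compact: "\<And>c::real. compact {y. ext_f \<Omega> f y + g y \<le> ereal c}"
    and M_pos: "M \<ge> 1"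
    and \<alpha>: "0 < \<alpha>" "\<alpha> < 1" and \<beta>: "0 < \<beta>" "\<beta> < 1"
    and \<tau>min_pos: "0 < \<tau>min" and \<mu>min_pos: "0 < \<mu>min" and \<mu>min_le_\<mu>max: "\<mu>min \<le> \<mu>max"
    and \<gamma>inc_ge_1: "1 \<le> \<gamma>inc"
    and \<mu>0: "\<mu>min \<le> \<mu> 0"
    and H_psd: "\<And>k d. 0 \<le> d \<bullet> (H k *v d)"
    and x0: "x 0 \<in> \<Omega>" "g (x 0) \<noteq> \<infinity>"
    and run: "osmm_run \<Omega> f fgrad g M \<alpha> \<beta> \<tau>min \<mu>min \<mu>max \<gamma>dec \<gamma>inc H x xh \<mu> t"
begin

abbreviation h :: "real^'n \<Rightarrow> ereal" where
  "h y \<equiv> ext_f \<Omega> f y + g y"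

abbreviation v :: "nat \<Rightarrow> real^'n" where
  "v k \<equiv> xh k - x k"

abbreviation lam :: "nat \<Rightarrow> real" where
  "lam k \<equiv> osmm_lambda \<tau>min (\<mu> k) (H k)"

abbreviation quad :: "nat \<Rightarrow> real" where
  "quad k \<equiv> osmm_quad (H k) (lam k) (v k)"

text \<open>The test of step (3) at step size \<open>s\<close>; \<open>osmm_quad\<close> already contains the factor \<open>1 / 2\<close>.\<close>

definition armijo :: "nat \<Rightarrow> real \<Rightarrow> bool" where
  "armijo k s \<longleftrightarrow>
     ext_f \<Omega> f (x k + s *\<^sub>R v k) + ereal s * g (xh k) + ereal (1 - s) * g (x k)
       \<le> h (x k) - ereal (\<alpha> * s * quad k)"

lemma xh_minimizes:
  "ereal (lin_model f fgrad x M k (xh k)) + g (xh k) + ereal (quad k)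
     \<le> ereal (lin_model f fgrad x M k y) + g y + ereal (osmm_quad (H k) (lam k) (y - x k))"
  using run unfolding osmm_run_def Let_def by blast

lemma t_backtracking: "\<exists>j. t k = \<beta> ^ j \<and> armijo k (\<beta> ^ j) \<and> (\<forall>i<j. \<not> armijo k (\<beta> ^ i))"
  using run unfolding osmm_run_def Let_def armijo_def by blast

lemma x_Suc: "x (Suc k) = x k + t k *\<^sub>R v k"
  using run unfolding osmm_run_def Let_def by blast

lemma \<mu>_Suc: "\<mu> (Suc k) = (if t k = 1 then max (\<gamma>dec * \<mu> k) \<mu>min else min (\<gamma>inc * \<mu> k) \<mu>max)"
  using run unfolding osmm_run_def Let_def by blast

lemma t_pos: "0 < t k" and t_le_1: "t k \<le> 1"
  using t_backtracking[of k] \<beta> by (auto simp: power_le_one)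

lemma \<mu>_ge_\<mu>min: "\<mu>min \<le> \<mu> k"
proof (induction k)
  case 0
  show ?case
    using \<mu>0 .
next
  case (Suc k)
  have "\<mu>min \<le> \<gamma>inc * \<mu> k"
    using Suc.IH \<gamma>inc_ge_1 \<mu>min_pos mult_mono[of 1 \<gamma>inc \<mu>min "\<mu> k"] by simp
  then show ?case
    using \<mu>_Suc[of k] \<mu>min_le_\<mu>max by simp
qed

lemma lam_ge: "\<mu>min * \<tau>min \<le> lam k"
  unfolding osmm_lambda_def
  using trace_nonneg_if_psd[OF H_psd, of k] \<mu>_ge_\<mu>min[of k] \<mu>min_pos \<tau>min_pos
  by (intro mult_mono) auto

lemma quad_ge: "\<mu>min * \<tau>min / 2 * (norm (v k))\<^sup>2 \<le> quad k"
proof -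
  have "\<mu>min * \<tau>min / 2 * (norm (v k))\<^sup>2 \<le> lam k / 2 * (norm (v k))\<^sup>2"
    using lam_ge[of k] by (intro mult_right_mono divide_right_mono) auto
  then show ?thesis
    using osmm_quad_ge[of "H k" "lam k" "v k", OF H_psd] by linarith
qed

lemma quad_nonneg: "0 \<le> quad k"
proof -
  have "0 \<le> \<mu>min * \<tau>min / 2 * (norm (v k))\<^sup>2"
    using \<mu>min_pos \<tau>min_pos by simp
  then show ?thesis
    using quad_ge[of k] by linarith
qed

lemma h_not_minf: "h y \<noteq> -\<infinity>"
  using g_not_minf[of y] by (cases "g y") (auto simp: ext_f_def)

lemma h_less_infinity_iff: "h y < \<infinity> \<longleftrightarrow> y \<in> \<Omega> \<and> g y \<noteq> \<infinity>"
  using g_not_minf[of y] by (cases "g y") (auto simp: ext_f_def)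

lemma linearization_le_lin_model:
  "f (x k) + fgrad (x k) \<bullet> (y - x k) \<le> lin_model f fgrad x M k y"
  unfolding lin_model_def using M_pos by (intro Max_ge) auto

lemma lin_model_le_at_iterate:
  assumes "\<And>i. i \<le> k \<Longrightarrow> x i \<in> \<Omega>"
  shows "lin_model f fgrad x M k (x k) \<le> f (x k)"
  unfolding lin_model_def using M_pos assms
  by (auto intro!: convex_on_gradient_inequality[OF \<Omega>_open f_convex] f_grad)

lemma model_decrease:
  assumes "\<And>i. i \<le> k \<Longrightarrow> x i \<in> \<Omega>" and "g (x k) \<noteq> \<infinity>"
  shows "g (xh k) \<noteq> \<infinity>"
    and "fgrad (x k) \<bullet> v k + real_of_ereal (g (xh k)) + quad k \<le> real_of_ereal (g (x k))"
proof -
  have "ereal (lin_model f fgrad x M k (xh k)) + g (xh k) + ereal (quad k)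
      \<le> ereal (lin_model f fgrad x M k (x k)) + g (x k)"
    using xh_minimizes[of k "x k"] by (simp add: osmm_quad_def)
  moreover have "g (x k) = ereal (real_of_ereal (g (x k)))"
    using assms(2) g_not_minf[of "x k"] by (cases "g (x k)") auto
  ultimately show "g (xh k) \<noteq> \<infinity>"
    by auto
  then have "g (xh k) = ereal (real_of_ereal (g (xh k)))"
    using g_not_minf[of "xh k"] by (cases "g (xh k)") auto
  with \<open>g (x k) = _\<close> \<open>ereal _ + g (xh k) + _ \<le> _\<close>
  have "lin_model f fgrad x M k (xh k) + real_of_ereal (g (xh k)) + quad k
      \<le> lin_model f fgrad x M k (x k) + real_of_ereal (g (x k))"
    by (metis plus_ereal.simps(1) ereal_less_eq(3))
  then show "fgrad (x k) \<bullet> v k + real_of_ereal (g (xh k)) + quad k \<le> real_of_ereal (g (x k))"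
    using linearization_le_lin_model[of k "xh k"] lin_model_le_at_iterate[of k, OF assms(1)] by linarith
qed

lemma armijo_sufficient_decrease:
  assumes "armijo k s" "0 \<le> s" "s \<le> 1" "g (x k) \<noteq> \<infinity>" "g (xh k) \<noteq> \<infinity>"
  shows "h (x k + s *\<^sub>R v k) \<le> h (x k) - ereal (\<alpha> * s * quad k)"
proof -
  obtain A where A: "g (x k) = ereal A"
    using assms(4) g_not_minf[of "x k"] by (cases "g (x k)") auto
  obtain B where B: "g (xh k) = ereal B"
    using assms(5) g_not_minf[of "xh k"] by (cases "g (xh k)") auto
  have "g (x k + s *\<^sub>R v k) \<le> ereal (s * B + (1 - s) * A)"
    using ereal_convexD[OF g_convex A B assms(2,3)] by simp
  then have "h (x k + s *\<^sub>R v k)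
      \<le> ext_f \<Omega> f (x k + s *\<^sub>R v k) + ereal s * g (xh k) + ereal (1 - s) * g (x k)"
    using A B by (simp add: add.assoc add_left_mono)
  also have "\<dots> \<le> h (x k) - ereal (\<alpha> * s * quad k)"
    using assms(1) unfolding armijo_def .
  finally show ?thesis .
qed

lemma sufficient_decrease_if_feasible:
  assumes "\<And>i. i \<le> k \<Longrightarrow> x i \<in> \<Omega>" and "g (x k) \<noteq> \<infinity>"
  shows "h (x (Suc k)) \<le> h (x k) - ereal (\<alpha> * t k * quad k)"
proof -
  have "armijo k (t k)"
    using t_backtracking[of k] by auto
  then show ?thesis
    using armijo_sufficient_decrease model_decrease(1)[OF assms] t_pos t_le_1 assms(2)
    by (simp add: x_Suc less_imp_le)
qed

lemma iterates_feasible: "x k \<in> \<Omega>" "g (x k) \<noteq> \<infinity>"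
proof -
  have "\<forall>i\<le>k. x i \<in> \<Omega> \<and> g (x i) \<noteq> \<infinity>"
  proof (induction k)
    case 0
    show ?case
      using x0 by simp
  next
    case (Suc k)
    then have "h (x k) < \<infinity>"
      using h_less_infinity_iff by blast
    then have "h (x k) - ereal (\<alpha> * t k * quad k) < \<infinity>"
      using h_not_minf[of "x k"] by (cases "h (x k)") auto
    then have "h (x (Suc k)) < \<infinity>"
      using sufficient_decrease_if_feasible[of k] Suc.IH by (auto elim: order.strict_trans1)
    then show ?case
      using Suc.IH h_less_infinity_iff by (auto simp: le_Suc_eq)
  qed
  then show "x k \<in> \<Omega>" "g (x k) \<noteq> \<infinity>"
    by auto
qed

lemma sufficient_decrease: "h (x (Suc k)) \<le> h (x k) - ereal (\<alpha> * t k * quad k)"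
  by (intro sufficient_decrease_if_feasible iterates_feasible)

definition hx :: "nat \<Rightarrow> real" where
  "hx k = real_of_ereal (h (x k))"

lemma h_iterate_eq: "h (x k) = ereal (hx k)"
  using h_less_infinity_iff[of "x k"] iterates_feasible[of k] h_not_minf[of "x k"]
  unfolding hx_def by (cases "h (x k)") auto

lemma hx_sufficient_decrease: "hx (Suc k) \<le> hx k - \<alpha> * t k * quad k"
  using sufficient_decrease[of k] by (simp add: h_iterate_eq)

lemma hx_decreasing: "hx (Suc k) \<le> hx k"
proof -
  have "0 \<le> \<alpha> * t k * quad k"
    using \<alpha> t_pos[of k] quad_nonneg[of k] by simp
  then show ?thesis
    using hx_sufficient_decrease[of k] by linarith
qed

lemma h_iterates_decreasing: "h (x (Suc k)) \<le> h (x k)"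
  using hx_decreasing[of k] by (simp add: h_iterate_eq)

lemma hx_bounded_below: "\<exists>B. \<forall>k. B \<le> hx k"
proof -
  obtain B where "\<And>y. ereal B \<le> h y"
    using bounded_below_if_compact_sublevels[of h] h_compact h_not_minf by blast
  then show ?thesis
    using h_iterate_eq by (metis ereal_less_eq(3))
qed

lemma step_length_sq_tendsto_zero: "(\<lambda>k. t k * (norm (v k))\<^sup>2) \<longlonglongrightarrow> 0"
proof -
  obtain B where bound: "\<And>k. B \<le> hx k"
    using hx_bounded_below by blast
  have decrement: "\<alpha> * (\<mu>min * \<tau>min / 2) * (t k * (norm (v k))\<^sup>2) \<le> hx k - hx (Suc k)" for k
  proof -
    have "\<alpha> * t k * (\<mu>min * \<tau>min / 2 * (norm (v k))\<^sup>2) \<le> \<alpha> * t k * quad k"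
      using quad_ge[of k] \<alpha> t_pos[of k] by (intro mult_left_mono) auto
    then show ?thesis
      using hx_sufficient_decrease[of k] by (simp add: algebra_simps)
  qed
  have "0 < \<alpha> * (\<mu>min * \<tau>min / 2)"
    using \<alpha> \<mu>min_pos \<tau>min_pos by simp
  moreover have "0 \<le> t k * (norm (v k))\<^sup>2" for k
    using t_pos[of k] by simp
  ultimately show ?thesis
    using decrement bound by (rule tendsto_zero_if_bounded_by_decrements)
qed

lemma iterates_uniformly_interior: "\<exists>\<delta>>0. \<forall>k. ball (x k) \<delta> \<subseteq> \<Omega>"
proof -
  let ?K = "{y. h y \<le> ereal (hx 0)}"
  have "?K \<subseteq> \<Omega>"
  proof
    fix y
    assume "y \<in> ?K"
    then have "h y < \<infinity>"
      using order.strict_trans1[of "h y" "ereal (hx 0)" \<infinity>] by simp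
    then show "y \<in> \<Omega>"
      using h_less_infinity_iff by blast
  qed
  then obtain \<delta> where "0 < \<delta>" and \<delta>: "(\<Union>y\<in>?K. ball y \<delta>) \<subseteq> \<Omega>"
    using compact_subset_open_imp_ball_epsilon_subset[OF h_compact \<Omega>_open] by blast
  have "x k \<in> ?K" for k
    using decseq_SucI[of hx, OF hx_decreasing] h_iterate_eq by (simp add: decseq_def)
  then have "ball (x k) \<delta> \<subseteq> \<Omega>" for k
    using \<delta> by blast
  with \<open>0 < \<delta>\<close> show ?thesis
    by auto
qed

text \<open>\<open>L + 1\<close> instead of \<open>L\<close> avoids a division by zero when \<open>L = 0\<close>.\<close>

definition armijo_threshold :: real where
  "armijo_threshold = (1 - \<alpha>) * (\<mu>min * \<tau>min / 2) / (L + 1)"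

lemma armijo_threshold_pos: "0 < armijo_threshold"
  using \<alpha> \<mu>min_pos \<tau>min_pos lipschitz_on_nonneg[OF f_lip] unfolding armijo_threshold_def by simp

lemma armijo_if_short_step:
  assumes "0 < s" "s \<le> armijo_threshold" and segment: "\<And>r. 0 \<le> r \<Longrightarrow> r \<le> s \<Longrightarrow> x k + r *\<^sub>R v k \<in> \<Omega>"
  shows "armijo k s"
proof -
  define A where "A = real_of_ereal (g (x k))"
  define B where "B = real_of_ereal (g (xh k))"
  have xk: "x k \<in> \<Omega>" "\<And>i. i \<le> k \<Longrightarrow> x i \<in> \<Omega>" "g (x k) \<noteq> \<infinity>"
    using iterates_feasible by auto
  have gA: "g (x k) = ereal A"
    using xk(3) g_not_minf[of "x k"] unfolding A_def by (cases "g (x k)") auto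
  have gB: "g (xh k) = ereal B"
    using model_decrease(1)[OF xk(2,3)] g_not_minf[of "xh k"] unfolding B_def by (cases "g (xh k)") auto
  have model: "fgrad (x k) \<bullet> v k + B + quad k \<le> A"
    using model_decrease(2)[OF xk(2,3)] unfolding A_def B_def .
  have upper: "f (x k + s *\<^sub>R v k) \<le> f (x k) + s * (fgrad (x k) \<bullet> v k) + L * s\<^sup>2 * (norm (v k))\<^sup>2"
    using lipschitz_gradient_upper_bound[OF f_grad f_lip _ segment] \<open>0 < s\<close> by simp
  have "0 \<le> L"
    using lipschitz_on_nonneg[OF f_lip] .
  have "L * s \<le> (L + 1) * armijo_threshold"
    using \<open>s \<le> armijo_threshold\<close> \<open>0 < s\<close> \<open>0 \<le> L\<close> by (intro mult_mono) auto
  also have "\<dots> = (1 - \<alpha>) * (\<mu>min * \<tau>min / 2)"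
    using \<open>0 \<le> L\<close> unfolding armijo_threshold_def by (simp add: field_simps)
  finally have "L * s * (norm (v k))\<^sup>2 \<le> (1 - \<alpha>) * (\<mu>min * \<tau>min / 2) * (norm (v k))\<^sup>2"
    by (rule mult_right_mono) simp
  also have "\<dots> \<le> (1 - \<alpha>) * quad k"
    using quad_ge[of k] \<alpha> by (simp add: mult.assoc mult_left_mono)
  finally have "s * (L * s * (norm (v k))\<^sup>2) \<le> s * ((1 - \<alpha>) * quad k)"
    using \<open>0 < s\<close> by (intro mult_left_mono) auto
  moreover have "s * (fgrad (x k) \<bullet> v k + B - A) \<le> s * (- quad k)"
    using model \<open>0 < s\<close> by (intro mult_left_mono) auto
  ultimately have "f (x k + s *\<^sub>R v k) + s * B + (1 - s) * A \<le> f (x k) + A - \<alpha> * s * quad k"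
    using upper by (simp add: algebra_simps power2_eq_square)
  then show ?thesis
    unfolding armijo_def using segment[of s] \<open>0 < s\<close> xk(1) gA gB by (simp add: ext_f_def)
qed

lemma step_size_alternatives:
  assumes "0 < \<delta>" "ball (x k) \<delta> \<subseteq> \<Omega>"
  shows "t k = 1 \<or> \<beta> * armijo_threshold < t k \<or> \<beta> * \<delta> \<le> t k * norm (v k)"
proof (rule ccontr)
  assume contra: "\<not> ?thesis"
  obtain j where t: "t k = \<beta> ^ j" and earlier_fail: "\<And>i. i < j \<Longrightarrow> \<not> armijo k (\<beta> ^ i)"
    using t_backtracking[of k] by blast
  then obtain i where j: "j = Suc i"
    using contra by (cases j) auto
  define s where "s = \<beta> ^ i"
  have "t k = \<beta> * s" "0 < s"
    using t j \<beta> unfolding s_def by auto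
  then have "s \<le> armijo_threshold" "s * norm (v k) < \<delta>"
    using contra \<beta> by (auto simp: mult.assoc)
  have "x k + r *\<^sub>R v k \<in> \<Omega>" if "0 \<le> r" "r \<le> s" for r
  proof -
    have "dist (x k) (x k + r *\<^sub>R v k) \<le> s * norm (v k)"
      using that by (simp add: dist_norm mult_right_mono)
    then show ?thesis
      using \<open>s * norm (v k) < \<delta>\<close> assms(2) by (auto simp: subset_eq)
  qed
  then have "armijo k s"
    using armijo_if_short_step \<open>0 < s\<close> \<open>s \<le> armijo_threshold\<close> by blast
  then show False
    using earlier_fail[of i] j unfolding s_def by simp
qed

lemma step_length_sq_ge:
  assumes "0 < \<delta>" "ball (x k) \<delta> \<subseteq> \<Omega>" "t k * (norm (v k))\<^sup>2 < (\<beta> * \<delta>)\<^sup>2"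
  shows "min 1 (\<beta> * armijo_threshold) * (norm (v k))\<^sup>2 \<le> t k * (norm (v k))\<^sup>2"
proof -
  have "min 1 (\<beta> * armijo_threshold) \<le> t k \<or> \<beta> * \<delta> \<le> t k * norm (v k)"
    using step_size_alternatives[OF assms(1,2)] by auto
  then show ?thesis
  proof
    assume "min 1 (\<beta> * armijo_threshold) \<le> t k"
    then show ?thesis
      by (rule mult_right_mono) simp
  next
    assume "\<beta> * \<delta> \<le> t k * norm (v k)"
    then have "(\<beta> * \<delta>)\<^sup>2 \<le> (t k * norm (v k))\<^sup>2"
      using \<beta> \<open>0 < \<delta>\<close> by (intro power_mono) auto
    also have "\<dots> = t k * (t k * (norm (v k))\<^sup>2)"
      by (simp add: power_mult_distrib power2_eq_square)
    also have "\<dots> \<le> t k * (norm (v k))\<^sup>2"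
      using t_pos[of k] t_le_1[of k] by (simp add: mult_left_le_one_le)
    finally show ?thesis
      using assms(3) by simp
  qed
qed

lemma step_tendsto_zero: "v \<longlonglongrightarrow> 0"
proof -
  obtain \<delta> where "0 < \<delta>" and \<delta>: "\<And>k. ball (x k) \<delta> \<subseteq> \<Omega>"
    using iterates_uniformly_interior by blast
  define m where "m = min 1 (\<beta> * armijo_threshold)"
  have "0 < m"
    using \<beta> armijo_threshold_pos unfolding m_def by simp
  have "\<forall>\<^sub>F k in sequentially. t k * (norm (v k))\<^sup>2 < (\<beta> * \<delta>)\<^sup>2"
    using order_tendstoD(2)[OF step_length_sq_tendsto_zero] \<beta> \<open>0 < \<delta>\<close> by simp
  then have "\<forall>\<^sub>F k in sequentially. norm (v k) \<le> sqrt (t k * (norm (v k))\<^sup>2 / m)"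
  proof eventually_elim
    case (elim k)
    then have "(norm (v k))\<^sup>2 \<le> t k * (norm (v k))\<^sup>2 / m"
      using step_length_sq_ge[OF \<open>0 < \<delta>\<close> \<delta>] \<open>0 < m\<close> unfolding m_def
      by (simp add: pos_le_divide_eq mult.commute)
    then show ?case
      by (rule real_le_rsqrt)
  qed
  moreover have "(\<lambda>k. sqrt (t k * (norm (v k))\<^sup>2 / m)) \<longlonglongrightarrow> 0"
    using tendsto_real_sqrt[OF tendsto_divide_zero[OF step_length_sq_tendsto_zero]] by simp
  ultimately show ?thesis
    by (rule Lim_null_comparison)
qed

end

theorem mainTheorem2:
  fixes \<Omega> :: "(real^'n) set" and f :: "real^'n \<Rightarrow> real" and fgrad :: "real^'n \<Rightarrow> real^'n"
    and g :: "real^'n \<Rightarrow> ereal" and L :: real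
    and M :: nat and \<alpha> \<beta> \<tau>min \<mu>min \<mu>max \<gamma>dec \<gamma>inc C :: real
    and H :: "nat \<Rightarrow> real^'n^'n" and x xh :: "nat \<Rightarrow> real^'n" and \<mu> t :: "nat \<Rightarrow> real"
  assumes \<Omega>: "open \<Omega>" "convex \<Omega>"
    and f_convex: "convex_on \<Omega> f"
    and f_grad: "\<And>y. y \<in> \<Omega> \<Longrightarrow> (f has_derivative (\<lambda>d. fgrad y \<bullet> d)) (at y)"
    and f_lip: "L-lipschitz_on \<Omega> fgrad"
    and g_not_minf: "\<And>y. g y \<noteq> -\<infinity>"
    and g_convex: "ereal_convex g"
    and g_closed: "\<And>c::real. closed {y. g y \<le> ereal c}"
    and h_compact: "\<And>c::real. compact {y. ext_f \<Omega> f y + g y \<le> ereal c}"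
    and h_inf: "(INF y. ext_f \<Omega> f y + g y) < \<infinity>"
    and params: "M \<ge> 1" "0 < \<alpha>" "\<alpha> < 1" "0 < \<beta>" "\<beta> < 1" "\<tau>min > 0"
      "0 < \<mu>min" "\<mu>min \<le> \<mu>max" "0 < \<gamma>dec" "\<gamma>dec < 1" "\<gamma>inc > 1"
    and mu0: "\<mu>min \<le> \<mu> 0" "\<mu> 0 \<le> \<mu>max"
    and H_sym: "\<And>k. transpose (H k) = H k"
    and H_psd: "\<And>k d. d \<bullet> (H k *v d) \<ge> 0"
    and H_bnd: "\<And>k. onorm (\<lambda>d. H k *v d) \<le> C"
    and x0: "x 0 \<in> \<Omega>" "g (x 0) < \<infinity>"
    and run: "osmm_run \<Omega> f fgrad g M \<alpha> \<beta> \<tau>min \<mu>min \<mu>max \<gamma>dec \<gamma>inc H x xh \<mu> t"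
  shows "(\<forall>k. ext_f \<Omega> f (x (Suc k)) + g (x (Suc k)) \<le> ext_f \<Omega> f (x k) + g (x k))
         \<and> (\<lambda>k. xh k - x k) \<longlonglongrightarrow> 0"
proof -
  interpret osmm \<Omega> f fgrad g L M \<alpha> \<beta> \<tau>min \<mu>min \<mu>max \<gamma>dec \<gamma>inc H x xh \<mu> t
    using assms by unfold_locales auto
  show ?thesis
    using h_iterates_decreasing step_tendsto_zero by blast
qed

end
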